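(* Let $\rho>1$. There exist a constant $D_0>0$ and an integer $N$, depending only on $T$ and $\rho$, such that for every $k$ and every pair of admissible $(k+1)$-words $w_1,w_2$ with $d_1\ge N$ and $d_2\ge N$, one has $|p_{11}(t)p_{22}(t)-p_{12}(t)p_{21}(t)|\ge D_0|t|^{d_1+d_2}$ for all complex $t$ with $|t|\ge\rho$.
   Context: Let $\mathcal{A}$ be a finite alphabet of $r$ symbols and $T=(T_{x,y})$ an irreducible $r\times r$ matrix with entries in $\{0,1\}$ (the directed graph on $\mathcal{A}$ with an edge $x\to y$ iff $T_{y,x}=1$ is strongly connected). An admissible $k$-word is a string $a_1\cdots a_k$ with $T_{a_{i+1},a_i}=1$ for all $i$. $V_k$ is the complex vector space with basis $\{[w]\}$ indexed by admissible $k$-words; $\psi_k:V_1\to V_k$ is linear with $\psi_k([a])$ the sum of $[w]$ over admissible $k$-words beginning with $a$; $T_k:V_k\to V_k$ is linear with $T_k([a_1\cdots a_k])=\sum[a_2\cdots a_kx]$ over symbols $x$ with $a_2\cdots a_kx$ admissible. For an admissible $k$-word $u=u_1\cdots u_k$, $h(u)$ is the least non-negative integer $h$ such that $u$ is the only admissible $k$-word beginning with $u_1\cdots u_{h+1}$. For admissible $(k+1)$-words $w_1=a_0\cdots a_k$, $w_2=b_0\cdots b_k$: $d_1=h(a_1\cdots a_k)$; $W$ is the span of $\psi_k(V_1)$ and $T_k^i[a_1\cdots a_k]$, $0\le i\le d_1-1$; $d_2$ is the least non-negative integer with $T_k^{d_2}[b_1\cdots b_k]\in W$. Correlation coefficients: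 for $0\le i\le d_1$, $c^{11}_{d_1-i}=1$ if $a_0\cdots a_{k-i}=a_i\cdots a_k$, $c^{21}_{d_1-i}=1$ if $b_0\cdots b_{k-i}=a_i\cdots a_k$; for $0\le j\le d_2$, $c^{12}_{d_2-j}=1$ if $a_0\cdots a_{k-j}=b_j\cdots b_k$, $c^{22}_{d_2-j}=1$ if $b_0\cdots b_{k-j}=b_j\cdots b_k$; all are $0$ otherwise. Correlation polynomials: $p_{11}(t)=\sum_{i=0}^{d_1}c^{11}_{d_1-i}t^{d_1-i}$, $p_{21}(t)=\sum_{i=1}^{d_1}c^{21}_{d_1-i}t^{d_1-i}$, $p_{12}(t)=\sum_{j=1}^{d_2}c^{12}_{d_2-j}t^{d_2-j}$, $p_{22}(t)=\sum_{j=0}^{d_2}c^{22}_{d_2-j}t^{d_2-j}$. *)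

theory Defs
  imports Complex_Main
begin

text \<open>Alphabet: a finite type 'a. The 0-1 matrix is T :: 'a => 'a => bool,
  with T y x meaning T_{y,x} = 1, i.e. an edge x -> y.\<close>

definition irreducible01 :: "('a \<Rightarrow> 'a \<Rightarrow> bool) \<Rightarrow> bool" where
  "irreducible01 T \<longleftrightarrow> (\<forall>x y. (x, y) \<in> {(x, y). T y x}\<^sup>*)"

definition admissible :: "('a \<Rightarrow> 'a \<Rightarrow> bool) \<Rightarrow> 'a list \<Rightarrow> bool" where
  "admissible T w \<longleftrightarrow> (\<forall>i. i + 1 < length w \<longrightarrow> T (w ! (i + 1)) (w ! i))"

definition adm_words :: "('a \<Rightarrow> 'a \<Rightarrow> bool) \<Rightarrow> nat \<Rightarrow> 'a list set" where
  "adm_words T k = {w. length w = k \<and> admissible T w}"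

text \<open>Vectors of V_k are represented as complex-valued functions on words
  (supported on admissible k-words); [w] is the indicator of w.\<close>
definition basis_vec :: "'a list \<Rightarrow> ('a list \<Rightarrow> complex)" where
  "basis_vec w = (\<lambda>u. if u = w then 1 else 0)"

definition psi :: "('a \<Rightarrow> 'a \<Rightarrow> bool) \<Rightarrow> nat \<Rightarrow> 'a \<Rightarrow> ('a list \<Rightarrow> complex)" where
  "psi T k a = (\<lambda>u. if u \<in> adm_words T k \<and> hd u = a then 1 else 0)"

text \<open>T_k [a_1...a_k] = sum of [a_2...a_k x] over admissible a_2...a_k x, extended linearly.\<close>
definition Tk :: "('a \<Rightarrow> 'a \<Rightarrow> bool) \<Rightarrow> nat \<Rightarrow> ('a list \<Rightarrow> complex) \<Rightarrow> ('a list \<Rightarrow> complex)" where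
  "Tk T k v = (\<lambda>u. if u \<in> adm_words T k
       then (\<Sum>w\<in>{w \<in> adm_words T k. tl w = butlast u}. v w) else 0)"

definition hh :: "('a \<Rightarrow> 'a \<Rightarrow> bool) \<Rightarrow> 'a list \<Rightarrow> nat" where
  "hh T u = (LEAST h. \<forall>v \<in> adm_words T (length u). take (h + 1) v = take (h + 1) u \<longrightarrow> v = u)"

definition Wspace :: "('a::finite \<Rightarrow> 'a \<Rightarrow> bool) \<Rightarrow> nat \<Rightarrow> 'a list \<Rightarrow> nat \<Rightarrow> ('a list \<Rightarrow> complex) set" where
  "Wspace T k u d1 = {v. \<exists>(c :: 'a \<Rightarrow> complex) (e :: nat \<Rightarrow> complex).
      v = (\<lambda>x. (\<Sum>a\<in>UNIV. c a * psi T k a x) + (\<Sum>i<d1. e i * (Tk T k ^^ i) (basis_vec u) x))}"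

definition d1 :: "('a::finite \<Rightarrow> 'a \<Rightarrow> bool) \<Rightarrow> 'a list \<Rightarrow> nat" where
  "d1 T w1 = hh T (tl w1)"

definition d2 :: "('a::finite \<Rightarrow> 'a \<Rightarrow> bool) \<Rightarrow> 'a list \<Rightarrow> 'a list \<Rightarrow> nat" where
  "d2 T w1 w2 = (LEAST d. (Tk T (length w1 - 1) ^^ d) (basis_vec (tl w2))
                      \<in> Wspace T (length w1 - 1) (tl w1) (d1 T w1))"

definition corr :: "'a list \<Rightarrow> 'a list \<Rightarrow> nat \<Rightarrow> bool" where
  "corr x y i \<longleftrightarrow> take (length x - i) x = drop i y"

definition p11 :: "('a::finite \<Rightarrow> 'a \<Rightarrow> bool) \<Rightarrow> 'a list \<Rightarrow> 'a list \<Rightarrow> complex \<Rightarrow> complex" where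
  "p11 T w1 w2 t = (\<Sum>i\<in>{0..d1 T w1}. (if corr w1 w1 i then 1 else 0) * t ^ (d1 T w1 - i))"

definition p21 :: "('a::finite \<Rightarrow> 'a \<Rightarrow> bool) \<Rightarrow> 'a list \<Rightarrow> 'a list \<Rightarrow> complex \<Rightarrow> complex" where
  "p21 T w1 w2 t = (\<Sum>i\<in>{1..d1 T w1}. (if corr w2 w1 i then 1 else 0) * t ^ (d1 T w1 - i))"

definition p12 :: "('a::finite \<Rightarrow> 'a \<Rightarrow> bool) \<Rightarrow> 'a list \<Rightarrow> 'a list \<Rightarrow> complex \<Rightarrow> complex" where
  "p12 T w1 w2 t = (\<Sum>j\<in>{1..d2 T w1 w2}. (if corr w1 w2 j then 1 else 0) * t ^ (d2 T w1 w2 - j))"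

definition p22 :: "('a::finite \<Rightarrow> 'a \<Rightarrow> bool) \<Rightarrow> 'a list \<Rightarrow> 'a list \<Rightarrow> complex \<Rightarrow> complex" where
  "p22 T w1 w2 t = (\<Sum>j\<in>{0..d2 T w1 w2}. (if corr w2 w2 j then 1 else 0) * t ^ (d2 T w1 w2 - j))"

end

theory Submission
  imports Defs
begin

text \<open>Substituting \<open>s = 1/t\<close>, each correlation polynomial becomes \<open>t^d\<close> times a truncated sum
  of the powers \<open>s^i\<close> over the shifts \<open>i\<close> at which the two words overlap, so it suffices to bound
  the determinant of these sums below for \<open>|s| \<le> r = 1/\<rho> < 1\<close>. Only shifts below a fixed \<open>M\<close>
  matter, up to an error \<open>O(r^M)\<close>. There the self-overlaps of a word are the multiples of its
  least period \<open>p\<close> (Fine and Wilf), and if both cross-overlaps occur, at least shifts \<open>i0\<close> and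
  \<open>j0\<close>, the two words have the same least period and the cross-overlaps are \<open>i0 + p\<nat>\<close> and
  \<open>j0 + p\<nat>\<close>. The determinant is therefore close to \<open>(1 - s^(i0+j0)) / (1 - s^p)^2\<close>, or to
  \<open>1 / ((1 - s^p1)(1 - s^p2))\<close> if some cross-overlap is missing, and both are at least
  \<open>(1 - r)/4\<close> in absolute value.\<close>

section \<open>Periods and overlaps of words\<close>

definition overlaps :: "'a list \<Rightarrow> 'a list \<Rightarrow> nat \<Rightarrow> bool" where
  "overlaps x y i \<longleftrightarrow> (\<forall>z. z + i < length y \<longrightarrow> x ! z = y ! (i + z))"

definition has_period :: "'a list \<Rightarrow> nat \<Rightarrow> bool" where
  "has_period w p \<longleftrightarrow> (\<forall>z. z + p < length w \<longrightarrow> w ! z = w ! (z + p))"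

definition least_period :: "'a list \<Rightarrow> nat" where
  "least_period w = (LEAST p. 0 < p \<and> has_period w p)"

lemma corr_iff_overlaps:
  assumes "length x = length y"
  shows "corr x y i \<longleftrightarrow> overlaps x y i"
proof (cases "i \<le> length y")
  case True
  show ?thesis unfolding corr_def overlaps_def
  proof
    assume h: "take (length x - i) x = drop i y"
    show "\<forall>z. z + i < length y \<longrightarrow> x ! z = y ! (i + z)"
    proof (intro allI impI)
      fix z assume z: "z + i < length y"
      have "take (length x - i) x ! z = drop i y ! z" using h by simp
      thus "x ! z = y ! (i + z)" using z assms by simp
    qed
  next
    assume "\<forall>z. z + i < length y \<longrightarrow> x ! z = y ! (i + z)"
    thus "take (length x - i) x = drop i y"
      by (intro nth_equalityI) (use assms True in \<open>auto simp: add.commute\<close>)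
  qed
next
  case False
  thus ?thesis unfolding corr_def overlaps_def using assms by auto
qed

lemma has_period_iff_overlaps: "has_period w p \<longleftrightarrow> overlaps w w p"
  unfolding has_period_def overlaps_def by (auto simp: add.commute)

lemma has_period_0 [simp]: "has_period w 0"
  unfolding has_period_def by simp

lemma has_period_ge_length: "length w \<le> p \<Longrightarrow> has_period w p"
  unfolding has_period_def by simp

lemma has_period_diff:
  assumes p: "has_period w p" and q: "has_period w q" and "p \<le> q" "p + q \<le> length w"
  shows "has_period w (q - p)"
  unfolding has_period_def
proof (intro allI impI)
  fix z assume z: "z + (q - p) < length w"
  show "w ! z = w ! (z + (q - p))"
  proof (cases "z + q < length w")
    case True
    have "w ! z = w ! (z + q)" using q True unfolding has_period_def by simp
    moreover have "w ! (z + q - p) = w ! (z + q - p + p)"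
      using p True \<open>p \<le> q\<close> unfolding has_period_def by auto
    ultimately show ?thesis using \<open>p \<le> q\<close> by (simp add: add_diff_eq)
  next
    case False
    hence "p \<le> z" using assms by linarith
    have "w ! (z - p) = w ! (z - p + p)" using p \<open>p \<le> z\<close> z \<open>p \<le> q\<close> unfolding has_period_def by auto
    moreover have "w ! (z - p) = w ! (z - p + q)" using q \<open>p \<le> z\<close> z \<open>p \<le> q\<close> unfolding has_period_def by auto
    ultimately show ?thesis using \<open>p \<le> z\<close> \<open>p \<le> q\<close> by (simp add: add_diff_eq)
  qed
qed

lemma has_period_gcd:
  "has_period w p \<Longrightarrow> has_period w q \<Longrightarrow> p + q \<le> length w \<Longrightarrow> has_period w (gcd p q)"
proof (induction "p + q" arbitrary: p q rule: less_induct)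
  case less
  show ?case
  proof (cases "p = 0 \<or> q = 0")
    case True
    thus ?thesis using less.prems by auto
  next
    case False
    show ?thesis
    proof (cases "p \<le> q")
      case True
      have "has_period w (gcd p (q - p))"
        using less False True has_period_diff[OF less.prems(1,2) True] by auto
      thus ?thesis using gcd_diff1_nat[OF True] by (simp add: gcd.commute)
    next
      case False
      hence "q \<le> p" by simp
      have "has_period w (gcd q (p - q))"
        using less \<open>\<not> (p = 0 \<or> q = 0)\<close> \<open>q \<le> p\<close> has_period_diff[OF less.prems(2,1) \<open>q \<le> p\<close>]
        by (auto simp: add.commute)
      thus ?thesis using gcd_diff1_nat[OF \<open>q \<le> p\<close>] by (simp add: gcd.commute)
    qed
  qed
qed

lemma has_period_mult: "has_period w p \<Longrightarrow> has_period w (m * p)"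
proof (induction m)
  case (Suc m)
  show ?case unfolding has_period_def
  proof (intro allI impI)
    fix z assume z: "z + Suc m * p < length w"
    have "w ! z = w ! (z + p)" using Suc.prems z unfolding has_period_def by auto
    also have "\<dots> = w ! (z + p + m * p)" using Suc z unfolding has_period_def by (auto simp: add.assoc)
    finally show "w ! z = w ! (z + Suc m * p)" by (simp add: add.assoc)
  qed
qed simp

lemma has_period_dvd: "has_period w p \<Longrightarrow> p dvd q \<Longrightarrow> has_period w q"
  by (metis dvdE has_period_mult mult.commute)

lemma least_period: "0 < least_period w" "has_period w (least_period w)"
proof -
  have "0 < Suc (length w) \<and> has_period w (Suc (length w))"
    by (simp add: has_period_ge_length)
  thus "0 < least_period w" "has_period w (least_period w)"
    unfolding least_period_def by (metis (mono_tags, lifting) LeastI)+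
qed

lemma least_period_le: "0 < q \<Longrightarrow> has_period w q \<Longrightarrow> least_period w \<le> q"
  unfolding least_period_def by (simp add: Least_le)

lemma has_period_iff_least_period_dvd:
  assumes "2 * L \<le> length w" "q < L"
  shows "has_period w q \<longleftrightarrow> least_period w dvd q"
proof
  assume q: "has_period w q"
  show "least_period w dvd q"
  proof (cases "q = 0")
    case False
    have "least_period w \<le> q" using False q by (simp add: least_period_le)
    hence "has_period w (gcd (least_period w) q)"
      using has_period_gcd[OF least_period(2) q] assms by simp
    moreover have "0 < gcd (least_period w) q" using False by simp
    ultimately have "least_period w \<le> gcd (least_period w) q" by (rule least_period_le[rotated])
    hence "gcd (least_period w) q = least_period w"
      using gcd_le1_nat[of "least_period w" q] least_period(1)[of w] by linarith
    thus ?thesis by (metis gcd_dvd2)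
  qed simp
qed (use has_period_dvd least_period(2) in blast)

lemma has_period_of_overlaps:
  assumes "length w1 = length w2" "overlaps w2 w1 i" "overlaps w1 w2 j"
  shows "has_period w1 (i + j)"
  unfolding has_period_def
proof (intro allI impI)
  fix z assume z: "z + (i + j) < length w1"
  have "w1 ! z = w2 ! (j + z)" using assms(1,3) z unfolding overlaps_def by auto
  also have "\<dots> = w1 ! (i + (j + z))" using assms(2) z unfolding overlaps_def by auto
  finally show "w1 ! z = w1 ! (z + (i + j))" by (simp add: add_ac)
qed

lemma overlaps_add_period_right:
  assumes "overlaps x y i" "has_period y p"
  shows "overlaps x y (i + p)"
  using assms unfolding overlaps_def has_period_def by (auto simp: add_ac)

lemma overlaps_add_period_left:
  assumes "length x = length y" "overlaps x y i" "has_period x p"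
  shows "overlaps x y (i + p)"
  unfolding overlaps_def
proof (intro allI impI)
  fix z assume z: "z + (i + p) < length y"
  have "x ! z = x ! (z + p)" using assms(1,3) z unfolding has_period_def by auto
  also have "\<dots> = y ! (i + p + z)" using assms(2) z unfolding overlaps_def by (auto simp: add_ac)
  finally show "x ! z = y ! (i + p + z)" .
qed

text \<open>Both \<open>i + j\<close> and, after shifting the overlap \<open>i\<close> by the least period \<open>p2\<close> of \<open>w2\<close>,
  \<open>i + p2 + j\<close> are small periods of \<open>w1\<close>, so the least period of \<open>w1\<close> divides their difference.\<close>
lemma least_period_dvd_of_overlaps:
  assumes len: "length w1 = length w2" "8 * M \<le> length w1"
    and i: "0 < i" "i < M" "overlaps w2 w1 i" and j: "j < M" "overlaps w1 w2 j"
  shows "least_period w1 dvd least_period w2"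
proof -
  have periods1: "has_period w1 q \<longleftrightarrow> least_period w1 dvd q" if "q < 4 * M" for q
    using has_period_iff_least_period_dvd[of "4 * M" w1, OF _ that] len by simp
  have periods2: "has_period w2 q \<longleftrightarrow> least_period w2 dvd q" if "q < 4 * M" for q
    using has_period_iff_least_period_dvd[of "4 * M" w2, OF _ that] len by simp
  have "least_period w1 dvd i + j"
    using periods1 has_period_of_overlaps[OF len(1) i(3) j(2)] i j by simp
  moreover have "least_period w2 dvd i + j"
    using periods2 has_period_of_overlaps[OF len(1)[symmetric] j(2) i(3)] i j by (simp add: add.commute)
  hence "least_period w2 \<le> i + j" using i by (simp add: dvd_imp_le)
  have "overlaps w2 w1 (i + least_period w2)"
    using overlaps_add_period_left[OF len(1)[symmetric] i(3) least_period(2)] .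
  hence "has_period w1 (i + least_period w2 + j)" using has_period_of_overlaps[OF len(1)] j by blast
  hence "least_period w1 dvd i + j + least_period w2"
    using periods1 \<open>least_period w2 \<le> i + j\<close> i j by (simp add: add_ac)
  ultimately show ?thesis by (simp add: dvd_add_right_iff)
qed

lemma least_period_eq_of_overlaps:
  assumes "length w1 = length w2" "8 * M \<le> length w1"
    and "0 < i" "i < M" "overlaps w2 w1 i" and "0 < j" "j < M" "overlaps w1 w2 j"
  shows "least_period w1 = least_period w2"
  using least_period_dvd_of_overlaps[of w1 w2 M i j] least_period_dvd_of_overlaps[of w2 w1 M j i]
    assms by (simp add: dvd_antisym)

lemma overlaps_iff_least_overlap:
  assumes len: "length w1 = length w2" "4 * M \<le> length w1"
    and i0: "0 < i0" "i0 < M" "overlaps w2 w1 i0" "\<And>i. 0 < i \<Longrightarrow> overlaps w2 w1 i \<Longrightarrow> i0 \<le> i"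
    and j: "j < M" "overlaps w1 w2 j"
    and "i < M"
  shows "0 < i \<and> overlaps w2 w1 i \<longleftrightarrow> i0 \<le> i \<and> least_period w1 dvd i - i0"
proof
  have periods1: "has_period w1 q \<longleftrightarrow> least_period w1 dvd q" if "q < 2 * M" for q
    using has_period_iff_least_period_dvd[of "2 * M" w1, OF _ that] len by simp
  have "least_period w1 dvd i0 + j"
    using periods1 has_period_of_overlaps[OF len(1) i0(3) j(2)] i0 j by simp
  assume i: "0 < i \<and> overlaps w2 w1 i"
  have "least_period w1 dvd i + j"
    using periods1 has_period_of_overlaps[OF len(1) conjunct2[OF i] j(2)] j \<open>i < M\<close> by simp
  hence "least_period w1 dvd (i + j) - (i0 + j)"
    using \<open>least_period w1 dvd i0 + j\<close> by (rule dvd_diff_nat)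
  thus "i0 \<le> i \<and> least_period w1 dvd i - i0" using i0(4) i by simp
next
  assume "i0 \<le> i \<and> least_period w1 dvd i - i0"
  then obtain m where m: "i = i0 + m * least_period w1" by (metis dvdE le_add_diff_inverse mult.commute)
  have "overlaps w2 w1 (i0 + m * least_period w1)"
    using overlaps_add_period_right[OF i0(3) has_period_mult[OF least_period(2)]] .
  thus "0 < i \<and> overlaps w2 w1 i" using m i0(1) by simp
qed

section \<open>Sums of selected powers\<close>

definition sel_poly :: "(nat \<Rightarrow> bool) \<Rightarrow> nat \<Rightarrow> 'a::real_normed_field \<Rightarrow> 'a" where
  "sel_poly c d s = (\<Sum>i\<le>d. if c i then s ^ i else 0)"

definition sel_series :: "(nat \<Rightarrow> bool) \<Rightarrow> 'a::real_normed_field \<Rightarrow> 'a" where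
  "sel_series c s = (\<Sum>i. if c i then s ^ i else 0)"

lemma norm_sel_term_le:
  fixes s :: "'a::real_normed_field"
  assumes "norm s \<le> r"
  shows "norm (if c i then s ^ i else 0) \<le> r ^ i"
  using assms order_trans[OF norm_ge_zero assms] by (auto simp: norm_power intro: power_mono)

lemma norm_suminf_le_geometric_tail:
  fixes f :: "nat \<Rightarrow> 'a::banach"
  assumes "0 \<le> r" "r < 1" "\<And>i. i < m \<Longrightarrow> f i = 0" "\<And>i. norm (f i) \<le> r ^ i"
  shows "norm (suminf f) \<le> r ^ m / (1 - r)"
proof -
  have geom: "summable (\<lambda>i. r ^ m * r ^ i)" using assms by (simp add: summable_geometric)
  have tail_le: "norm (f (i + m)) \<le> r ^ m * r ^ i" for i
    using assms(4)[of "i + m"] by (simp add: power_add mult.commute)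
  hence tail: "summable (\<lambda>i. norm (f (i + m)))"
    by (intro summable_comparison_test'[OF geom, where N=0]) simp
  hence "summable (\<lambda>i. f (i + m))" by (rule summable_norm_cancel)
  hence "summable f" by (rule summable_iff_shift[THEN iffD1])
  hence "suminf f = (\<Sum>i. f (i + m))" using suminf_split_initial_segment[of f m] assms(3) by simp
  also have "norm \<dots> \<le> (\<Sum>i. norm (f (i + m)))" using tail by (rule summable_norm)
  also have "\<dots> \<le> (\<Sum>i. r ^ m * r ^ i)"
    by (rule suminf_le) (use tail_le tail geom in simp_all)
  also have "\<dots> = r ^ m / (1 - r)" using assms by (simp add: suminf_mult suminf_geometric)
  finally show ?thesis .
qed

text \<open>At each index at most one of the two summands is nonzero, and none below \<open>M\<close>, so the
  difference is dominated termwise by the geometric tail from \<open>M\<close> on.\<close>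
lemma norm_sel_poly_sub_sel_series_le:
  fixes s :: "'a::{real_normed_field, banach}"
  assumes "norm s \<le> r" "r < 1" "\<And>i. i < M \<Longrightarrow> c i = c' i" "M \<le> d"
  shows "norm (sel_poly c d s - sel_series c' s) \<le> r ^ M / (1 - r)"
proof -
  define f where "f i = (if i \<le> d \<and> c i then s ^ i else 0)" for i
  define g where "g i = (if c' i then s ^ i else 0)" for i
  have r0: "0 \<le> r" using assms(1) norm_ge_zero order_trans by blast
  have "summable (\<lambda>i. norm (g i))"
    by (rule summable_comparison_test'[of "\<lambda>i. r ^ i"])
      (use assms r0 in \<open>auto simp: g_def summable_geometric norm_power intro: power_mono\<close>)
  hence "summable g" by (rule summable_norm_cancel)
  moreover have "summable f" "suminf f = sel_poly c d s"
    using suminf_finite[of "{..d}" f] summable_finite[of "{..d}" f]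
    by (auto simp: f_def sel_poly_def intro!: sum.cong)
  ultimately have "sel_poly c d s - sel_series c' s = (\<Sum>i. f i - g i)"
    unfolding sel_series_def g_def[symmetric] by (metis suminf_diff)
  also have "norm \<dots> \<le> r ^ M / (1 - r)"
    by (rule norm_suminf_le_geometric_tail[OF r0 assms(2)])
      (use assms r0 in \<open>auto simp: f_def g_def norm_power intro: power_mono\<close>)
  finally show ?thesis .
qed

lemma norm_sel_poly_le:
  fixes s :: "'a::real_normed_field"
  assumes "norm s \<le> r" "r < 1"
  shows "norm (sel_poly c d s) \<le> 1 / (1 - r)"
proof -
  have r0: "0 \<le> r" using assms(1) norm_ge_zero order_trans by blast
  have "norm (sel_poly c d s) \<le> (\<Sum>i\<le>d. r ^ i)"
    unfolding sel_poly_def by (rule order_trans[OF norm_sum sum_mono]) (rule norm_sel_term_le[OF assms(1)])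
  also have "\<dots> \<le> (\<Sum>i. r ^ i)"
    by (rule sum_le_suminf) (use assms r0 in \<open>auto simp: summable_geometric\<close>)
  also have "\<dots> = 1 / (1 - r)" using assms r0 by (simp add: suminf_geometric)
  finally show ?thesis .
qed

lemma sel_series_arith_progression:
  fixes s :: "'a::{real_normed_field, banach}"
  assumes "0 < p" "norm s < 1"
  shows "sel_series (\<lambda>i. i0 \<le> i \<and> p dvd i - i0) s = s ^ i0 / (1 - s ^ p)"
proof -
  let ?f = "\<lambda>i. if i0 \<le> i \<and> p dvd i - i0 then s ^ i else 0"
  have "norm (s ^ p) < 1" using assms by (simp add: norm_power power_less_one_iff)
  hence "(\<lambda>m. s ^ i0 * (s ^ p) ^ m) sums (s ^ i0 * (1 / (1 - s ^ p)))"
    by (intro sums_mult geometric_sums)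
  moreover have "?f (i0 + p * m) = s ^ i0 * (s ^ p) ^ m" for m
    by (simp add: power_add power_mult)
  ultimately have sums: "(\<lambda>m. ?f (i0 + p * m)) sums (s ^ i0 / (1 - s ^ p))" by simp
  have mono: "strict_mono (\<lambda>m. i0 + p * m)" using assms by (auto simp: strict_mono_def)
  have zero: "?f n = 0" if "n \<notin> range (\<lambda>m. i0 + p * m)" for n
  proof -
    have "\<not> (i0 \<le> n \<and> p dvd n - i0)"
      using that by (auto simp: dvd_def image_def) (metis le_add_diff_inverse)
    thus ?thesis by (simp only: if_False)
  qed
  have "?f sums (s ^ i0 / (1 - s ^ p))"
    using sums_mono_reindex[of "\<lambda>m. i0 + p * m" ?f "s ^ i0 / (1 - s ^ p)"] mono zero sums by blast
  thus ?thesis unfolding sel_series_def by (rule sums_unique[symmetric])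
qed

lemma sel_series_dvd:
  fixes s :: "'a::{real_normed_field, banach}"
  assumes "0 < p" "norm s < 1"
  shows "sel_series (\<lambda>i. p dvd i) s = 1 / (1 - s ^ p)"
  using sel_series_arith_progression[OF assms, of 0] by simp

lemma norm_one_minus_power_ge:
  fixes s :: "'a::real_normed_field"
  assumes "norm s \<le> r" "r < 1" "0 < p"
  shows "1 - r \<le> norm (1 - s ^ p)"
proof -
  have "norm (s ^ p) \<le> norm s"
    using power_decreasing[of 1 p "norm s"] assms by (simp add: norm_power)
  moreover have "1 - norm (s ^ p) \<le> norm (1 - s ^ p)"
    using norm_triangle_ineq2[of 1 "s ^ p"] by simp
  ultimately show ?thesis using assms(1) by simp
qed

lemma norm_one_minus_power_le:
  fixes s :: "'a::real_normed_field"
  assumes "norm s \<le> 1"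
  shows "norm (1 - s ^ p) \<le> 2"
proof -
  have "norm (s ^ p) \<le> 1" using assms by (simp add: norm_power power_le_one)
  thus ?thesis using norm_triangle_ineq4[of 1 "s ^ p"] by simp
qed

lemma norm_power_div_one_minus_power_le:
  fixes s :: "'a::real_normed_field"
  assumes "norm s \<le> r" "r < 1" "0 < p"
  shows "norm (s ^ i / (1 - s ^ p)) \<le> 1 / (1 - r)"
proof -
  have l: "1 - r \<le> norm (1 - s ^ p)" by (rule norm_one_minus_power_ge[OF assms])
  have "norm (s ^ i) \<le> 1" using assms by (simp add: norm_power power_le_one)
  hence "norm (s ^ i / (1 - s ^ p)) \<le> 1 / norm (1 - s ^ p)"
    using l assms by (simp add: norm_divide divide_right_mono)
  also have "\<dots> \<le> 1 / (1 - r)" using l assms by (simp add: frac_le)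
  finally show ?thesis .
qed

lemma norm_inverse_one_minus_powers_ge:
  fixes s :: "'a::real_normed_field"
  assumes "norm s \<le> r" "r < 1" "0 < p" "0 < q"
  shows "1 / 4 \<le> norm (1 / (1 - s ^ p) * (1 / (1 - s ^ q)))"
proof -
  have "0 < norm (1 - s ^ p)" "0 < norm (1 - s ^ q)"
    using norm_one_minus_power_ge[OF assms(1,2)] assms(2-4) by (metis diff_gt_0_iff_gt order_less_le_trans)+
  moreover have "norm (1 - s ^ p) \<le> 2" "norm (1 - s ^ q) \<le> 2"
    using norm_one_minus_power_le assms by (metis order_trans less_imp_le)+
  ultimately have "norm (1 - s ^ p) * norm (1 - s ^ q) \<le> 4" "0 < norm (1 - s ^ p) * norm (1 - s ^ q)"
    using mult_mono[of "norm (1 - s ^ p)" 2 "norm (1 - s ^ q)" 2] by auto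
  thus ?thesis by (simp add: norm_divide norm_mult frac_le)
qed

lemma norm_limit_det_ge:
  fixes s :: "'a::real_normed_field"
  assumes "norm s \<le> r" "r < 1" "0 < p" "0 < i + j"
  shows "(1 - r) / 4 \<le> norm (1 / (1 - s ^ p) * (1 / (1 - s ^ p)) - s ^ j / (1 - s ^ p) * (s ^ i / (1 - s ^ p)))"
proof -
  have den: "0 < norm (1 - s ^ p)" "norm (1 - s ^ p) \<le> 2"
    using norm_one_minus_power_ge[OF assms(1-3)] norm_one_minus_power_le[of s p] assms by auto
  have num: "1 - r \<le> norm (1 - s ^ (i + j))" by (rule norm_one_minus_power_ge[OF assms(1,2,4)])
  have eq: "1 / (1 - s ^ p) * (1 / (1 - s ^ p)) - s ^ j / (1 - s ^ p) * (s ^ i / (1 - s ^ p))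
      = (1 - s ^ (i + j)) / ((1 - s ^ p) * (1 - s ^ p))"
    using den by (simp add: power_add diff_divide_distrib mult.commute)
  have "(1 - r) / 4 \<le> (1 - r) / (norm (1 - s ^ p) * norm (1 - s ^ p))"
    using den assms(2) mult_mono[OF den(2) den(2)] by (intro divide_left_mono) auto
  also have "\<dots> \<le> norm (1 - s ^ (i + j)) / (norm (1 - s ^ p) * norm (1 - s ^ p))"
    using num den by (intro divide_right_mono) auto
  finally show ?thesis unfolding eq by (simp add: norm_divide norm_mult)
qed

lemma norm_det_ge_of_approx:
  fixes A B C D A' B' C' D' :: "'a::real_normed_field"
  assumes "norm (A - A') \<le> e" "norm (B - B') \<le> e" "norm (C - C') \<le> e" "norm (D - D') \<le> e"
    and "norm B \<le> K" "norm A' \<le> K" "norm D \<le> K" "norm C' \<le> K"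
  shows "norm (A' * B' - C' * D') - 4 * K * e \<le> norm (A * B - C * D)"
proof -
  have "e \<ge> 0" "K \<ge> 0" using assms(1,5) norm_ge_zero order_trans by blast+
  have "(A * B - C * D) - (A' * B' - C' * D')
      = (A - A') * B + A' * (B - B') - ((C - C') * D + C' * (D - D'))"
    by (simp add: algebra_simps)
  also have "norm \<dots> \<le> norm ((A - A') * B + A' * (B - B')) + norm ((C - C') * D + C' * (D - D'))"
    by (rule norm_triangle_ineq4)
  also have "\<dots> \<le> norm ((A - A') * B) + norm (A' * (B - B')) + (norm ((C - C') * D) + norm (C' * (D - D')))"
    by (intro add_mono norm_triangle_ineq)
  also have "\<dots> \<le> e * K + K * e + (e * K + K * e)"
    unfolding norm_mult using assms \<open>e \<ge> 0\<close> \<open>K \<ge> 0\<close> by (intro add_mono mult_mono) auto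
  finally have "norm ((A * B - C * D) - (A' * B' - C' * D')) \<le> 4 * K * e" by simp
  thus ?thesis using norm_triangle_ineq2[of "A' * B' - C' * D'" "A * B - C * D"]
    by (simp add: norm_minus_commute)
qed

section \<open>Correlation polynomials\<close>

lemma autocorrelation_approx:
  fixes s :: "'a::{real_normed_field, banach}"
  assumes "2 * M \<le> length w" "M \<le> d" "norm s \<le> r" "r < 1"
  shows "norm (sel_poly (corr w w) d s - 1 / (1 - s ^ least_period w)) \<le> r ^ M / (1 - r)"
proof -
  have "corr w w i \<longleftrightarrow> least_period w dvd i" if "i < M" for i
    using corr_iff_overlaps has_period_iff_overlaps has_period_iff_least_period_dvd[OF assms(1) that]
    by metis
  thus ?thesis
    using norm_sel_poly_sub_sel_series_le[OF assms(3,4) _ assms(2), of "corr w w" "\<lambda>i. least_period w dvd i"]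
      sel_series_dvd[of "least_period w" s, OF least_period(1)] assms(3,4) by simp
qed

lemma crosscorrelation_approx:
  fixes s :: "'a::{real_normed_field, banach}"
  assumes len: "length w1 = length w2" "4 * M \<le> length w1" and "M \<le> d" "norm s \<le> r" "r < 1"
    and i: "0 < i" "i < M" "overlaps w2 w1 i" and j: "j < M" "overlaps w1 w2 j"
  obtains i0 where "0 < i0"
    "norm (sel_poly (\<lambda>i. 0 < i \<and> corr w2 w1 i) d s - s ^ i0 / (1 - s ^ least_period w1)) \<le> r ^ M / (1 - r)"
proof
  define i0 where "i0 = (LEAST i. 0 < i \<and> overlaps w2 w1 i)"
  have i0: "0 < i0" "overlaps w2 w1 i0" "i0 \<le> i"
    using LeastI[of "\<lambda>i. 0 < i \<and> overlaps w2 w1 i" i] Least_le[of "\<lambda>i. 0 < i \<and> overlaps w2 w1 i" i] i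
    unfolding i0_def by auto
  have i0_least: "i0 \<le> i'" if "0 < i'" "overlaps w2 w1 i'" for i'
    unfolding i0_def using that by (simp add: Least_le)
  have "0 < i' \<and> corr w2 w1 i' \<longleftrightarrow> i0 \<le> i' \<and> least_period w1 dvd i' - i0" if "i' < M" for i'
    using overlaps_iff_least_overlap[OF len i0(1) _ i0(2) i0_least j that] i0(3) i(2)
      corr_iff_overlaps[OF len(1)[symmetric]] by simp
  thus "norm (sel_poly (\<lambda>i. 0 < i \<and> corr w2 w1 i) d s - s ^ i0 / (1 - s ^ least_period w1))
      \<le> r ^ M / (1 - r)"
    using norm_sel_poly_sub_sel_series_le[OF assms(4,5) _ assms(3),
        of "\<lambda>i. 0 < i \<and> corr w2 w1 i" "\<lambda>i. i0 \<le> i \<and> least_period w1 dvd i - i0"]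
      sel_series_arith_progression[of "least_period w1" s i0, OF least_period(1)] assms(4,5) by simp
  show "0 < i0" by (fact i0(1))
qed

lemma crosscorrelation_approx_zero:
  fixes s :: "'a::{real_normed_field, banach}"
  assumes "length w1 = length w2" "M \<le> d" "norm s \<le> r" "r < 1"
    and "\<And>i. 0 < i \<Longrightarrow> i < M \<Longrightarrow> \<not> overlaps w2 w1 i"
  shows "norm (sel_poly (\<lambda>i. 0 < i \<and> corr w2 w1 i) d s) \<le> r ^ M / (1 - r)"
proof -
  have "\<not> (0 < i \<and> corr w2 w1 i)" if "i < M" for i
    using corr_iff_overlaps[OF assms(1)[symmetric]] assms(5) that by auto
  thus ?thesis
    using norm_sel_poly_sub_sel_series_le[OF assms(3,4) _ assms(2), of "\<lambda>i. 0 < i \<and> corr w2 w1 i" "\<lambda>i. False"]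
    by (simp add: sel_series_def)
qed

lemma crosscorrelation_limits:
  fixes s :: "'a::{real_normed_field, banach}"
  assumes len: "length w1 = length w2" "8 * M \<le> length w1" and "M \<le> da" "M \<le> db"
    and s: "norm s \<le> r" "r < 1"
  obtains C' D' where
    "norm (sel_poly (\<lambda>i. 0 < i \<and> corr w1 w2 i) db s - C') \<le> r ^ M / (1 - r)"
    "norm (sel_poly (\<lambda>i. 0 < i \<and> corr w2 w1 i) da s - D') \<le> r ^ M / (1 - r)"
    "norm C' \<le> 1 / (1 - r)"
    "(1 - r) / 4 \<le> norm (1 / (1 - s ^ least_period w1) * (1 / (1 - s ^ least_period w2)) - C' * D')"
proof -
  let ?C = "sel_poly (\<lambda>i. 0 < i \<and> corr w1 w2 i) db s"
  let ?D = "sel_poly (\<lambda>i. 0 < i \<and> corr w2 w1 i) da s"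
  have "0 \<le> r" using s(1) norm_ge_zero order_trans by blast
  hence "(1 - r) / 4 \<le> 1 / 4" by simp
  hence inverses_ge: "(1 - r) / 4 \<le> norm (1 / (1 - s ^ least_period w1) * (1 / (1 - s ^ least_period w2)))"
    using norm_inverse_one_minus_powers_ge[OF s least_period(1)[of w1] least_period(1)[of w2]] by linarith
  have len4: "4 * M \<le> length w1" "4 * M \<le> length w2" using len by auto
  consider (cross) i j where "0 < i" "i < M" "overlaps w2 w1 i" "0 < j" "j < M" "overlaps w1 w2 j"
    | (no21) "\<And>i. 0 < i \<Longrightarrow> i < M \<Longrightarrow> \<not> overlaps w2 w1 i"
    | (no12) "\<And>j. 0 < j \<Longrightarrow> j < M \<Longrightarrow> \<not> overlaps w1 w2 j"
    by blast
  then show ?thesis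
  proof cases
    case cross
    have p: "least_period w2 = least_period w1"
      using least_period_eq_of_overlaps[OF len cross] by simp
    obtain i0 where i0: "0 < i0" "norm (?D - s ^ i0 / (1 - s ^ least_period w1)) \<le> r ^ M / (1 - r)"
      using crosscorrelation_approx[OF len(1) len4(1) assms(3) s cross(1-3) cross(5,6)] .
    obtain j0 where j0: "0 < j0" "norm (?C - s ^ j0 / (1 - s ^ least_period w1)) \<le> r ^ M / (1 - r)"
      using crosscorrelation_approx[OF len(1)[symmetric] len4(2) assms(4) s cross(4-6) cross(2,3)] p
      by metis
    show ?thesis
    proof (rule that[OF j0(2) i0(2)])
      show "norm (s ^ j0 / (1 - s ^ least_period w1)) \<le> 1 / (1 - r)"
        by (rule norm_power_div_one_minus_power_le[OF s least_period(1)[of w1]])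
      show "(1 - r) / 4 \<le> norm (1 / (1 - s ^ least_period w1) * (1 / (1 - s ^ least_period w2))
          - s ^ j0 / (1 - s ^ least_period w1) * (s ^ i0 / (1 - s ^ least_period w1)))"
        using norm_limit_det_ge[OF s least_period(1)[of w1], of i0 j0] i0(1) p by simp
    qed
  next
    case no21
    show ?thesis
      by (rule that[of ?C 0]) (use crosscorrelation_approx_zero[OF len(1) assms(3) s no21]
          norm_sel_poly_le[OF s] inverses_ge s \<open>0 \<le> r\<close> in simp_all)
  next
    case no12
    show ?thesis
      by (rule that[of 0 ?D]) (use crosscorrelation_approx_zero[OF len(1)[symmetric] assms(4) s no12]
          s \<open>0 \<le> r\<close> inverses_ge in simp_all)
  qed
qed

lemma correlation_det_ge:
  fixes s :: "'a::{real_normed_field, banach}"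
  assumes len: "length w1 = length w2" "8 * M \<le> length w1" and "M \<le> da" "M \<le> db"
    and s: "norm s \<le> r" "r < 1" and M: "32 * r ^ M \<le> (1 - r) ^ 3"
  shows "(1 - r) / 8 \<le> norm (sel_poly (corr w1 w1) da s * sel_poly (corr w2 w2) db s
      - sel_poly (\<lambda>i. 0 < i \<and> corr w1 w2 i) db s * sel_poly (\<lambda>i. 0 < i \<and> corr w2 w1 i) da s)"
proof -
  obtain C' D' where C'D':
    "norm (sel_poly (\<lambda>i. 0 < i \<and> corr w1 w2 i) db s - C') \<le> r ^ M / (1 - r)"
    "norm (sel_poly (\<lambda>i. 0 < i \<and> corr w2 w1 i) da s - D') \<le> r ^ M / (1 - r)"
    "norm C' \<le> 1 / (1 - r)"
    "(1 - r) / 4 \<le> norm (1 / (1 - s ^ least_period w1) * (1 / (1 - s ^ least_period w2)) - C' * D')"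
    by (rule crosscorrelation_limits[OF len assms(3,4) s])
  have A': "norm (1 / (1 - s ^ least_period w1)) \<le> 1 / (1 - r)"
    using norm_power_div_one_minus_power_le[OF s least_period(1)[of w1], of 0] by simp
  have pos: "0 < (1 - r) ^ 2" using s(2) by simp
  have "4 * (1 / (1 - r)) * (r ^ M / (1 - r)) = 4 * r ^ M / (1 - r) ^ 2"
    by (simp add: power2_eq_square)
  also have "\<dots> \<le> (1 - r) / 8"
  proof (rule pos_divide_le_eq[OF pos, THEN iffD2])
    have "(1 - r) / 8 * (1 - r) ^ 2 = (1 - r) ^ 3 / 8" by (simp add: power2_eq_square power3_eq_cube)
    thus "4 * r ^ M \<le> (1 - r) / 8 * (1 - r) ^ 2" using M by linarith
  qed
  finally have margin: "4 * (1 / (1 - r)) * (r ^ M / (1 - r)) \<le> (1 - r) / 8" .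
  have "norm (1 / (1 - s ^ least_period w1) * (1 / (1 - s ^ least_period w2)) - C' * D')
      - 4 * (1 / (1 - r)) * (r ^ M / (1 - r))
      \<le> norm (sel_poly (corr w1 w1) da s * sel_poly (corr w2 w2) db s
        - sel_poly (\<lambda>i. 0 < i \<and> corr w1 w2 i) db s * sel_poly (\<lambda>i. 0 < i \<and> corr w2 w1 i) da s)"
    using len by (intro norm_det_ge_of_approx autocorrelation_approx C'D'(1-3) A' norm_sel_poly_le s
        assms(3,4)) auto
  thus ?thesis using C'D'(4) margin by linarith
qed

lemma sum_indicator_power_eq_sel_poly:
  fixes t :: "'a::real_normed_field"
  assumes "t \<noteq> 0"
  shows "(\<Sum>i\<in>{0..d}. (if c i then 1 else 0) * t ^ (d - i)) = t ^ d * sel_poly c d (1 / t)"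
  unfolding sel_poly_def sum_distrib_left atLeast0AtMost
  using assms by (intro sum.cong) (auto simp: power_diff power_one_over)

lemma sum_indicator_power_pos_eq_sel_poly:
  fixes t :: "'a::real_normed_field"
  assumes "t \<noteq> 0"
  shows "(\<Sum>i\<in>{1..d}. (if c i then 1 else 0) * t ^ (d - i)) = t ^ d * sel_poly (\<lambda>i. 0 < i \<and> c i) d (1 / t)"
proof -
  have "(\<Sum>i\<in>{1..d}. (if c i then 1 else 0) * t ^ (d - i))
      = (\<Sum>i\<in>{0..d}. (if 0 < i \<and> c i then 1 else 0) * t ^ (d - i))"
    by (rule sum.mono_neutral_cong_left) auto
  thus ?thesis using sum_indicator_power_eq_sel_poly[OF assms] by simp
qed

lemma correlation_polys_det_eq:
  assumes "t \<noteq> 0"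
  shows "p11 T w1 w2 t * p22 T w1 w2 t - p12 T w1 w2 t * p21 T w1 w2 t
    = t ^ (d1 T w1 + d2 T w1 w2) *
      (sel_poly (corr w1 w1) (d1 T w1) (1 / t) * sel_poly (corr w2 w2) (d2 T w1 w2) (1 / t)
       - sel_poly (\<lambda>i. 0 < i \<and> corr w1 w2 i) (d2 T w1 w2) (1 / t)
         * sel_poly (\<lambda>i. 0 < i \<and> corr w2 w1 i) (d1 T w1) (1 / t))"
  unfolding p11_def p22_def p12_def p21_def sum_indicator_power_eq_sel_poly[OF assms]
    sum_indicator_power_pos_eq_sel_poly[OF assms]
  by (simp add: power_add algebra_simps)

lemma hh_le_length: "hh T u \<le> length u"
  unfolding hh_def by (rule Least_le) (auto simp: adm_words_def)

lemma correlation_polys_det_ge: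
  assumes "length w1 = length w2" "8 * M \<le> length w1" "M \<le> d1 T w1" "M \<le> d2 T w1 w2"
    and "t \<noteq> 0" "norm (1 / t) \<le> r" "r < 1" "32 * r ^ M \<le> (1 - r) ^ 3"
  shows "(1 - r) / 8 * cmod t ^ (d1 T w1 + d2 T w1 w2)
    \<le> cmod (p11 T w1 w2 t * p22 T w1 w2 t - p12 T w1 w2 t * p21 T w1 w2 t)"
proof -
  let ?det = "sel_poly (corr w1 w1) (d1 T w1) (1 / t) * sel_poly (corr w2 w2) (d2 T w1 w2) (1 / t)
    - sel_poly (\<lambda>i. 0 < i \<and> corr w1 w2 i) (d2 T w1 w2) (1 / t)
      * sel_poly (\<lambda>i. 0 < i \<and> corr w2 w1 i) (d1 T w1) (1 / t)"
  have "(1 - r) / 8 \<le> norm ?det" by (rule correlation_det_ge[OF assms(1-4,6-8)])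
  hence "(1 - r) / 8 * cmod t ^ (d1 T w1 + d2 T w1 w2) \<le> norm ?det * cmod t ^ (d1 T w1 + d2 T w1 w2)"
    by (rule mult_right_mono) simp
  thus ?thesis
    by (simp add: correlation_polys_det_eq[OF assms(5)] norm_mult norm_power mult.commute)
qed

theorem proposition4p3:
  fixes T :: "'a::finite \<Rightarrow> 'a \<Rightarrow> bool" and \<rho> :: real
  assumes "irreducible01 T" and "\<rho> > 1"
  shows "\<exists>D0 > 0. \<exists>N :: nat. \<forall>k \<ge> 1. \<forall>w1 w2.
           w1 \<in> adm_words T (k + 1) \<longrightarrow> w2 \<in> adm_words T (k + 1) \<longrightarrow>
           d1 T w1 \<ge> N \<longrightarrow> d2 T w1 w2 \<ge> N \<longrightarrow>
           (\<forall>t :: complex. cmod t \<ge> \<rho> \<longrightarrow>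
              cmod (p11 T w1 w2 t * p22 T w1 w2 t - p12 T w1 w2 t * p21 T w1 w2 t)
                \<ge> D0 * cmod t ^ (d1 T w1 + d2 T w1 w2))"
proof -
  define r where "r = 1 / \<rho>"
  have r: "0 < r" "r < 1" using assms(2) by (auto simp: r_def)
  obtain M where M: "r ^ M < (1 - r) ^ 3 / 32" using real_arch_pow_inv[of "(1 - r) ^ 3 / 32" r] r by auto
  show ?thesis
  proof (intro exI[of _ "(1 - r) / 8"] conjI exI[of _ "8 * M"] allI impI)
    fix k w1 w2 and t :: complex
    assume w: "w1 \<in> adm_words T (k + 1)" "w2 \<in> adm_words T (k + 1)"
      and d: "8 * M \<le> d1 T w1" "8 * M \<le> d2 T w1 w2" and t: "\<rho> \<le> cmod t"
    have "d1 T w1 \<le> k" using hh_le_length[of T "tl w1"] w(1) by (simp add: d1_def adm_words_def)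
    moreover have "t \<noteq> 0" "norm (1 / t) \<le> r" using t assms(2) by (auto simp: r_def norm_divide frac_le)
    ultimately show "(1 - r) / 8 * cmod t ^ (d1 T w1 + d2 T w1 w2)
        \<le> cmod (p11 T w1 w2 t * p22 T w1 w2 t - p12 T w1 w2 t * p21 T w1 w2 t)"
      using w d M r by (intro correlation_polys_det_ge[of w1 w2 M]) (auto simp: adm_words_def)
  qed (use r in simp)
qed

end
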